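(* The symmetric precubical set of labels $\mathrm{sh}_{\square_S}\mathcal{L}_{\square_S}(!\Sigma)$ is isomorphic to the following symmetric precubical set $!^S\Sigma$: $(!^S\Sigma)_0=\{()\}$ (the empty word); $(!^S\Sigma)_n=\Sigma^n$ for $n\ge1$; $\partial_i^0(a_1,\dots,a_n)=\partial_i^1(a_1,\dots,a_n)=(a_1,\dots,\widehat{a_i},\dots,a_n)$ (the letter $a_i$ removed); and $s_i(a_1,\dots,a_n)=(a_1,\dots,a_{i-1},a_{i+1},a_i,a_{i+2},\dots,a_n)$ for $1\le i\le n-1$.
   Context: $[0]=\{()\}$, $[n]=\{0,1\}^n$ ($n\ge1$) with the product order; ${\rm PoSet}$: posets with strictly increasing maps. Face maps $\delta_i^\alpha:[n-1]\to[n]$ insert $\alpha$ at position $i$; $\square$ is the subcategory of ${\rm PoSet}$ with objects $[n]$, $n\ge0$, generated by face maps; its presheaves are precubical sets. Symmetry maps $\sigma_i:[n]\to[n]$ ($n\ge2$, $1\le i\le n-1$) swap coordinates $i$ and $i+1$. $\square_S$ is the subcategory of ${\rm PoSet}$ with objects $[n]$ generated by the face maps and the symmetry maps; its presheaves are symmetric precubical sets, with $\partial_i^\alpha=(\delta_i^\alpha)^*$ and $s_i=(\sigma_i)^*$. $\square_S[p]=\square_S(-,[p])$ and $\partial\square_S[p]$ is its subpresheaf of cubes of dimension $<p$. $\mathcal L_{\square_S}$ is the left adjoint of restriction from symmetric precubical sets to precubical sets. $\Sigma$ is a non-empty set; $!\Sigma$ is the precubical set with $(!\Sigma)_0=\{()\}$,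 $(!\Sigma)_n=\Sigma^n$, $\partial_i^0=\partial_i^1$ deleting the $i$-th letter. $\mathrm{sh}_{\square_S}$ is the left adjoint of the inclusion of the full subcategory of symmetric precubical sets orthogonal to the maps $\square_S[p]\sqcup_{\partial\square_S[p]}\square_S[p]\to\square_S[p]$, $p\ge2$. *)

theory Defs
  imports Main
begin

text \<open>The poset [n] = {0,1}^n is represented by the set of boolean lists of length n
  (coordinates 1..n are list positions 0..n-1). A morphism [m] -> [n] is represented
  as a function on boolean lists, made extensional by restricting it to lists of length m.\<close>

type_synonym cmap = "bool list \<Rightarrow> bool list"

definition rst :: "nat \<Rightarrow> cmap \<Rightarrow> cmap" where
  "rst m f = (\<lambda>x. if length x = m then f x else undefined)"

definition face :: "nat \<Rightarrow> 'x \<Rightarrow> 'x list \<Rightarrow> 'x list" where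
  "face i a x = take (i - 1) x @ a # drop (i - 1) x"

definition swp :: "nat \<Rightarrow> 'x list \<Rightarrow> 'x list" where
  "swp i x = take (i - 1) x @ [x ! i, x ! (i - 1)] @ drop (i + 1) x"

definition del :: "nat \<Rightarrow> 'x list \<Rightarrow> 'x list" where
  "del i x = take (i - 1) x @ drop i x"

text \<open>Morphisms of the precubical site: subcategory generated by face maps.
  pmor m n f means f is a morphism [m] -> [n].\<close>
inductive pmor :: "nat \<Rightarrow> nat \<Rightarrow> cmap \<Rightarrow> bool" where
  pid: "pmor n n (rst n id)"
| pface: "1 \<le> i \<Longrightarrow> i \<le> Suc n \<Longrightarrow> pmor n (Suc n) (rst n (face i a))"
| pcomp: "pmor m n f \<Longrightarrow> pmor n k g \<Longrightarrow> pmor m k (rst m (g \<circ> f))"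

text \<open>Morphisms of the symmetric precubical site: generated by face and symmetry maps.\<close>
inductive smor :: "nat \<Rightarrow> nat \<Rightarrow> cmap \<Rightarrow> bool" where
  sid: "smor n n (rst n id)"
| sface: "1 \<le> i \<Longrightarrow> i \<le> Suc n \<Longrightarrow> smor n (Suc n) (rst n (face i a))"
| ssym: "1 \<le> i \<Longrightarrow> i < n \<Longrightarrow> smor n n (rst n (swp i))"
| scomp: "smor m n f \<Longrightarrow> smor n k g \<Longrightarrow> smor m k (rst m (g \<circ> f))"

definition presheaf ::
  "(nat \<Rightarrow> nat \<Rightarrow> cmap \<Rightarrow> bool) \<Rightarrow> (nat \<Rightarrow> 'a set) \<Rightarrow> (nat \<Rightarrow> nat \<Rightarrow> cmap \<Rightarrow> 'a \<Rightarrow> 'a) \<Rightarrow> bool" where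
  "presheaf M X act \<longleftrightarrow>
     (\<forall>m n f x. M m n f \<and> x \<in> X n \<longrightarrow> act m n f x \<in> X m) \<and>
     (\<forall>n x. x \<in> X n \<longrightarrow> act n n (rst n id) x = x) \<and>
     (\<forall>m n k f g x. M m n f \<and> M n k g \<and> x \<in> X k \<longrightarrow>
        act m k (rst m (g \<circ> f)) x = act m n f (act n k g x))"

definition nat_trans ::
  "(nat \<Rightarrow> nat \<Rightarrow> cmap \<Rightarrow> bool) \<Rightarrow> (nat \<Rightarrow> 'a set) \<Rightarrow> (nat \<Rightarrow> nat \<Rightarrow> cmap \<Rightarrow> 'a \<Rightarrow> 'a)
    \<Rightarrow> (nat \<Rightarrow> 'b set) \<Rightarrow> (nat \<Rightarrow> nat \<Rightarrow> cmap \<Rightarrow> 'b \<Rightarrow> 'b) \<Rightarrow> (nat \<Rightarrow> 'a \<Rightarrow> 'b) \<Rightarrow> bool" where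
  "nat_trans M X actX Y actY h \<longleftrightarrow>
     (\<forall>n x. x \<in> X n \<longrightarrow> h n x \<in> Y n) \<and>
     (\<forall>m n f x. M m n f \<and> x \<in> X n \<longrightarrow> h m (actX m n f x) = actY m n f (h n x))"

definition eq_on :: "(nat \<Rightarrow> 'a set) \<Rightarrow> (nat \<Rightarrow> 'a \<Rightarrow> 'b) \<Rightarrow> (nat \<Rightarrow> 'a \<Rightarrow> 'b) \<Rightarrow> bool" where
  "eq_on X h h' \<longleftrightarrow> (\<forall>n. \<forall>x\<in>X n. h n x = h' n x)"

definition rep :: "nat \<Rightarrow> nat \<Rightarrow> cmap set" where
  "rep p m = {f. smor m p f}"

definition rep_act :: "nat \<Rightarrow> nat \<Rightarrow> cmap \<Rightarrow> cmap \<Rightarrow> cmap" where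
  "rep_act m n g f = rst m (f \<circ> g)"

text \<open>The pushout square_S[p] \<squnion>_{boundary square_S[p]} square_S[p], computed pointwise:
  in dimensions m < p (the boundary) both copies are identified (tag False),
  in dimension p there are two copies (tags False / True).\<close>
definition po :: "nat \<Rightarrow> nat \<Rightarrow> (bool \<times> cmap) set" where
  "po p m = {(b, f). smor m p f \<and> (m < p \<longrightarrow> \<not> b)}"

definition po_act :: "nat \<Rightarrow> nat \<Rightarrow> nat \<Rightarrow> cmap \<Rightarrow> bool \<times> cmap \<Rightarrow> bool \<times> cmap" where
  "po_act p m n g bf = (fst bf \<and> \<not> m < p, rst m (snd bf \<circ> g))"

definition codiag :: "nat \<Rightarrow> bool \<times> cmap \<Rightarrow> cmap" where
  "codiag n bf = snd bf"

definition orthogonal_to ::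
  "nat \<Rightarrow> (nat \<Rightarrow> 'b set) \<Rightarrow> (nat \<Rightarrow> nat \<Rightarrow> cmap \<Rightarrow> 'b \<Rightarrow> 'b) \<Rightarrow> bool" where
  "orthogonal_to p Y actY \<longleftrightarrow>
     (\<forall>h. nat_trans smor (po p) (po_act p) Y actY h \<longrightarrow>
        (\<exists>g. nat_trans smor (rep p) rep_act Y actY g \<and>
             eq_on (po p) (\<lambda>n x. g n (codiag n x)) h \<and>
             (\<forall>g'. nat_trans smor (rep p) rep_act Y actY g' \<and>
                   eq_on (po p) (\<lambda>n x. g' n (codiag n x)) h \<longrightarrow> eq_on (rep p) g g')))"

text \<open>Symmetric precubical sets in the reflective subcategory (target of sh).\<close>
definition sheaf :: "(nat \<Rightarrow> 'b set) \<Rightarrow> (nat \<Rightarrow> nat \<Rightarrow> cmap \<Rightarrow> 'b \<Rightarrow> 'b) \<Rightarrow> bool" where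
  "sheaf Y actY \<longleftrightarrow> presheaf smor Y actY \<and> (\<forall>p\<ge>2. orthogonal_to p Y actY)"

text \<open>Words of length n over Sigma: carriers of !Sigma and !^S Sigma.\<close>
definition words :: "'a set \<Rightarrow> nat \<Rightarrow> 'a list set" where
  "words S n = {w. length w = n \<and> set w \<subseteq> S}"

end

theory Submission
  imports Defs
begin

text \<open>A map \<open>[m] \<rightarrow> [n]\<close> of the symmetric cube category copies each coordinate of its
  source to its own coordinate \<open>\<pi> j\<close> of the target and fills the remaining ones with
  constants. Reading off this injection \<open>\<pi>\<close> lets it act on a word \<open>w\<close> of length \<open>n\<close> as
  \<open>[w ! \<pi> 0, \<dots>, w ! \<pi> (m - 1)]\<close>: faces delete letters and symmetries swap them.
  Orthogonality to the codiagonal of the pushout of two \<open>p\<close>-cubes along their boundary says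
  precisely that a \<open>p\<close>-cube is determined by its boundary, and a word of length \<open>p \<ge> 2\<close> is
  determined by its first and last faces; so the words form a sheaf.

  For the universal property, let \<open>f\<close> be a morphism of precubical sets into a sheaf \<open>Y\<close>. By
  induction on the dimension, \<open>f (s w)\<close> and \<open>s (f w)\<close> have the same boundary for every symmetry
  \<open>s\<close>, because each map into a lower dimension factors through a face; hence they are equal,
  and \<open>f\<close> is already a morphism of symmetric precubical sets.\<close>

lemma length_face [simp]: "i - 1 \<le> length x \<Longrightarrow> length (face i a x) = Suc (length x)"
  by (simp add: face_def)

lemma nth_face:
  "i - 1 \<le> length x \<Longrightarrow> p < Suc (length x) \<Longrightarrow>
   face i a x ! p = (if p < i - 1 then x ! p else if p = i - 1 then a else x ! (p - 1))"
  by (auto simp: face_def nth_append min_def nth_Cons split: nat.splits;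
      (rule arg_cong[where f="nth x"]; arith)?)

lemma length_swp [simp]: "1 \<le> i \<Longrightarrow> i < length x \<Longrightarrow> length (swp i x) = length x"
  by (simp add: swp_def)

lemma nth_swp:
  "1 \<le> i \<Longrightarrow> i < length x \<Longrightarrow> p < length x \<Longrightarrow>
   swp i x ! p = (if p = i - 1 then x ! i else if p = i then x ! (i - 1) else x ! p)"
  by (auto simp: swp_def nth_append min_def nth_Cons split: nat.splits;
      (rule arg_cong[where f="nth x"]; arith)?)

lemma length_del [simp]: "1 \<le> i \<Longrightarrow> i \<le> length x \<Longrightarrow> length (del i x) = length x - 1"
  by (simp add: del_def)

lemma nth_del:
  "1 \<le> i \<Longrightarrow> i \<le> length x \<Longrightarrow> p < length x - 1 \<Longrightarrow>
   del i x ! p = (if p < i - 1 then x ! p else x ! Suc p)"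
  by (auto simp: del_def nth_append min_def)

lemma eq_if_del_first_last:
  assumes "length u = p" "length v = p" "2 \<le> p"
    and "del 1 u = del 1 v" "del p u = del p v"
  shows "u = v"
proof (rule nth_equalityI)
  have tl: "drop 1 u = drop 1 v" and butlast: "take (p - 1) u = take (p - 1) v"
    using assms by (simp_all add: del_def)
  fix k assume "k < length u"
  then show "u ! k = v ! k"
    using arg_cong[OF butlast, of "\<lambda>l. l ! 0"] arg_cong[OF tl, of "\<lambda>l. l ! (k - 1)"] assms
    by (cases k) simp_all
qed (simp add: assms)

lemma nth_face_Suc:
  "j \<le> length x \<Longrightarrow> p \<le> length x \<Longrightarrow>
   face (Suc j) a x ! p = (if p < j then x ! p else if p = j then a else x ! (p - 1))"
  using nth_face[of "Suc j" x p a] by simp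

lemma nth_swp_Suc:
  "Suc i < length x \<Longrightarrow> p < length x \<Longrightarrow>
   swp (Suc i) x ! p = (if p = i then x ! Suc i else if p = Suc i then x ! i else x ! p)"
  using nth_swp[of "Suc i" x p] by simp

lemma swp_face_before:
  "j \<le> i \<Longrightarrow> Suc i < length x \<Longrightarrow>
   swp (Suc (Suc i)) (face (Suc j) a x) = face (Suc j) a (swp (Suc i) x)"
  by (rule nth_equalityI) (auto simp: nth_face_Suc nth_swp_Suc)

lemma swp_face_at:
  "i < length x \<Longrightarrow> swp (Suc i) (face (Suc i) a x) = face (Suc (Suc i)) a x"
  by (rule nth_equalityI) (auto simp: nth_face_Suc nth_swp_Suc)

lemma swp_face_at_Suc:
  "i < length x \<Longrightarrow> swp (Suc i) (face (Suc (Suc i)) a x) = face (Suc i) a x"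
  by (rule nth_equalityI) (auto simp: nth_face_Suc nth_swp_Suc)

lemma swp_face_after:
  "Suc i < j \<Longrightarrow> j \<le> length x \<Longrightarrow>
   swp (Suc i) (face (Suc j) a x) = face (Suc j) a (swp (Suc i) x)"
  by (rule nth_equalityI) (auto simp: nth_face_Suc nth_swp_Suc)

section \<open>Maps of the symmetric cube category as coordinate embeddings\<close>

definition coord_embedding :: "nat \<Rightarrow> nat \<Rightarrow> cmap \<Rightarrow> (nat \<Rightarrow> nat) \<Rightarrow> bool" where
  "coord_embedding m n f \<pi> \<longleftrightarrow>
     (\<forall>x. length x = m \<longrightarrow> length (f x) = n) \<and> (\<forall>j<m. \<pi> j < n) \<and> inj_on \<pi> {..<m} \<and>
     (\<forall>x j. length x = m \<and> j < m \<longrightarrow> f x ! \<pi> j = x ! j) \<and>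
     (\<forall>i<n. i \<notin> \<pi> ` {..<m} \<longrightarrow> (\<exists>c. \<forall>x. length x = m \<longrightarrow> f x ! i = c))"

lemma coord_embeddingD:
  assumes "coord_embedding m n f \<pi>"
  shows coord_embedding_length: "\<And>x. length x = m \<Longrightarrow> length (f x) = n"
    and coord_embedding_lt: "\<And>j. j < m \<Longrightarrow> \<pi> j < n"
    and coord_embedding_nth: "\<And>x j. length x = m \<Longrightarrow> j < m \<Longrightarrow> f x ! \<pi> j = x ! j"
    and coord_embedding_const:
      "\<And>i. i < n \<Longrightarrow> i \<notin> \<pi> ` {..<m} \<Longrightarrow> \<exists>c. \<forall>x. length x = m \<longrightarrow> f x ! i = c"
  using assms unfolding coord_embedding_def by blast+

lemma coord_embedding_id: "coord_embedding n n (rst n id) id"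
  by (auto simp: coord_embedding_def rst_def)

lemma coord_embedding_face:
  assumes "1 \<le> i" "i \<le> Suc n"
  shows "coord_embedding n (Suc n) (rst n (face i a)) (\<lambda>j. if j < i - 1 then j else Suc j)"
  unfolding coord_embedding_def
proof (intro conjI allI impI)
  fix k assume k: "k < Suc n" "k \<notin> (\<lambda>j. if j < i - 1 then j else Suc j) ` {..<n}"
  have "k = i - 1"
  proof (rule ccontr)
    assume "k \<noteq> i - 1"
    then have "k \<in> (\<lambda>j. if j < i - 1 then j else Suc j) ` {..<n}"
      using k(1) assms by (cases "k < i - 1") (auto intro!: image_eqI[where x="k - 1"])
    with k show False by blast
  qed
  then show "\<exists>c. \<forall>x. length x = n \<longrightarrow> rst n (face i a) x ! k = c"
    using assms by (auto simp: rst_def nth_face)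
qed (use assms in \<open>auto simp: rst_def nth_face inj_on_def split: if_splits\<close>)

definition swp_index :: "nat \<Rightarrow> nat \<Rightarrow> nat" where
  "swp_index i j = (if j = i - 1 then i else if j = i then i - 1 else j)"

lemma coord_embedding_swp:
  assumes "1 \<le> i" "i < n"
  shows "coord_embedding n n (rst n (swp i)) (swp_index i)"
  unfolding coord_embedding_def
proof (intro conjI allI impI)
  fix k assume k: "k < n" "k \<notin> swp_index i ` {..<n}"
  have "swp_index i (swp_index i k) = k" "swp_index i k < n"
    using assms k(1) by (auto simp: swp_index_def)
  then have "k \<in> swp_index i ` {..<n}" by (metis imageI lessThan_iff)
  with k show "\<exists>c. \<forall>x. length x = n \<longrightarrow> rst n (swp i) x ! k = c" by blast
qed (use assms in \<open>auto simp: rst_def nth_swp swp_index_def inj_on_def split: if_splits\<close>)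

lemma coord_embedding_comp:
  assumes f: "coord_embedding m n f \<pi>f" and g: "coord_embedding n k g \<pi>g"
  shows "coord_embedding m k (rst m (g \<circ> f)) (\<pi>g \<circ> \<pi>f)"
  unfolding coord_embedding_def
proof (intro conjI allI impI)
  show "inj_on (\<pi>g \<circ> \<pi>f) {..<m}"
    using f g unfolding coord_embedding_def
    by (metis comp_inj_on image_subsetI inj_on_subset lessThan_iff)
next
  fix i assume i: "i < k" "i \<notin> (\<pi>g \<circ> \<pi>f) ` {..<m}"
  show "\<exists>c. \<forall>x. length x = m \<longrightarrow> rst m (g \<circ> f) x ! i = c"
  proof (cases "i \<in> \<pi>g ` {..<n}")
    case False
    then obtain c where "\<forall>y. length y = n \<longrightarrow> g y ! i = c"
      using coord_embedding_const[OF g i(1)] by blast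
    then show ?thesis using coord_embedding_length[OF f] by (auto simp: rst_def)
  next
    case True
    then obtain l where l: "l < n" "i = \<pi>g l" by auto
    with i have "l \<notin> \<pi>f ` {..<m}" by auto
    then obtain c where "\<forall>x. length x = m \<longrightarrow> f x ! l = c"
      using coord_embedding_const[OF f l(1)] by blast
    then show ?thesis
      using l coord_embedding_nth[OF g] coord_embedding_length[OF f] by (auto simp: rst_def)
  qed
qed (use f g in \<open>auto simp: coord_embedding_def rst_def\<close>)

lemma smor_coord_embedding: "smor m n f \<Longrightarrow> \<exists>\<pi>. coord_embedding m n f \<pi>"
  by (induction rule: smor.induct)
    (blast intro: coord_embedding_id coord_embedding_face coord_embedding_swp coord_embedding_comp)+

text \<open>Test on the indicator vector of coordinate \<open>j\<close> and on the two constant vectors.\<close>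
lemma coord_embedding_unique:
  assumes f: "coord_embedding m n f \<pi>" and "j < m" "i < n"
    and copies: "\<forall>x. length x = m \<longrightarrow> f x ! i = x ! j"
  shows "i = \<pi> j"
proof (rule ccontr)
  assume ne: "i \<noteq> \<pi> j"
  show False
  proof (cases "i \<in> \<pi> ` {..<m}")
    case True
    then obtain j' where j': "j' < m" "i = \<pi> j'" by auto
    define x where "x = (replicate m False)[j := True]"
    have "x ! j' = x ! j"
      using coord_embedding_nth[OF f _ j'(1), of x] copies j' by (simp add: x_def)
    moreover have "j' \<noteq> j" using ne j' by blast
    ultimately show False using j' \<open>j < m\<close> by (simp add: x_def)
  next
    case False
    then obtain c where "\<forall>x. length x = m \<longrightarrow> f x ! i = c"
      using coord_embedding_const[OF f \<open>i < n\<close>] by blast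
    then have "replicate m False ! j = replicate m True ! j"
      using copies by (metis length_replicate)
    then show False using \<open>j < m\<close> by simp
  qed
qed

definition coord :: "nat \<Rightarrow> nat \<Rightarrow> cmap \<Rightarrow> nat \<Rightarrow> nat" where
  "coord m n f j = (THE i. i < n \<and> (\<forall>x. length x = m \<longrightarrow> f x ! i = x ! j))"

lemma coord_eq:
  assumes "coord_embedding m n f \<pi>" "j < m"
  shows "coord m n f j = \<pi> j"
  unfolding coord_def
proof (rule the_equality)
  show "\<pi> j < n \<and> (\<forall>x. length x = m \<longrightarrow> f x ! \<pi> j = x ! j)"
    using coord_embedding_lt[OF assms] coord_embedding_nth[OF assms(1) _ assms(2)] by blast
qed (use coord_embedding_unique[OF assms] in blast)

lemma coord_embedding_cong:
  assumes "coord_embedding m n f \<pi>" "\<And>j. j < m \<Longrightarrow> \<pi>' j = \<pi> j"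
  shows "coord_embedding m n f \<pi>'"
proof -
  have "\<pi>' ` {..<m} = \<pi> ` {..<m}" "inj_on \<pi>' {..<m} = inj_on \<pi> {..<m}"
    using assms(2) by (auto intro!: image_cong inj_on_cong)
  with assms show ?thesis by (simp add: coord_embedding_def)
qed

lemma smor_coord_embedding_coord: "smor m n f \<Longrightarrow> coord_embedding m n f (coord m n f)"
  using smor_coord_embedding coord_embedding_cong coord_eq by metis

lemma coord_lt: "smor m n f \<Longrightarrow> j < m \<Longrightarrow> coord m n f j < n"
  using smor_coord_embedding_coord coord_embedding_lt by blast

lemma coord_comp:
  "smor m n f \<Longrightarrow> smor n k g \<Longrightarrow> j < m \<Longrightarrow>
   coord m k (rst m (g \<circ> f)) j = coord n k g (coord m n f j)"
  using coord_eq[OF coord_embedding_comp[OF smor_coord_embedding_coord smor_coord_embedding_coord]]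
  by simp

section \<open>The symmetric precubical set of words\<close>

lemma coord_id: "j < n \<Longrightarrow> coord n n (rst n id) j = j"
  using coord_eq[OF coord_embedding_id] by simp

lemma coord_face:
  "1 \<le> i \<Longrightarrow> i \<le> Suc n \<Longrightarrow> j < n \<Longrightarrow>
   coord n (Suc n) (rst n (face i a)) j = (if j < i - 1 then j else Suc j)"
  using coord_eq[OF coord_embedding_face] by blast

lemma coord_swp: "1 \<le> i \<Longrightarrow> i < n \<Longrightarrow> j < n \<Longrightarrow> coord n n (rst n (swp i)) j = swp_index i j"
  using coord_eq[OF coord_embedding_swp] by blast

definition word_act :: "nat \<Rightarrow> nat \<Rightarrow> cmap \<Rightarrow> 'a list \<Rightarrow> 'a list" where
  "word_act m n f w = map (\<lambda>j. w ! coord m n f j) [0..<m]"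

lemma length_word_act [simp]: "length (word_act m n f w) = m"
  by (simp add: word_act_def)

lemma word_act_words: "smor m n f \<Longrightarrow> w \<in> words S n \<Longrightarrow> word_act m n f w \<in> words S m"
  unfolding words_def word_act_def
  by (auto dest!: coord_lt intro!: nth_mem[THEN subsetD[rotated]])

lemma word_act_id: "length w = n \<Longrightarrow> word_act n n (rst n id) w = w"
  unfolding word_act_def by (rule nth_equalityI) (simp_all add: coord_id)

lemma word_act_comp:
  "smor m n f \<Longrightarrow> smor n k g \<Longrightarrow> length w = k \<Longrightarrow>
   word_act m k (rst m (g \<circ> f)) w = word_act m n f (word_act n k g w)"
  unfolding word_act_def by (rule nth_equalityI) (simp_all add: coord_comp coord_lt)

lemma word_act_face:
  "1 \<le> i \<Longrightarrow> i \<le> Suc n \<Longrightarrow> length w = Suc n \<Longrightarrow>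
   word_act n (Suc n) (rst n (face i a)) w = del i w"
  unfolding word_act_def by (rule nth_equalityI) (simp_all add: coord_face nth_del)

lemma word_act_swp:
  "1 \<le> i \<Longrightarrow> i < n \<Longrightarrow> length w = n \<Longrightarrow> word_act n n (rst n (swp i)) w = swp i w"
  unfolding word_act_def by (rule nth_equalityI) (auto simp: coord_swp nth_swp swp_index_def)

lemma presheaf_word_act: "presheaf smor (words S) word_act"
  unfolding presheaf_def
proof (intro conjI allI impI)
  fix m n f w assume "smor m n f \<and> w \<in> words S n"
  then show "word_act m n f w \<in> words S m" using word_act_words by blast
qed (simp_all add: words_def word_act_id word_act_comp)

section \<open>Factorisation through faces\<close>

lemma smor_length: "smor m n f \<Longrightarrow> length x = m \<Longrightarrow> length (f x) = n"
  using smor_coord_embedding coord_embedding_length by blast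

lemma smor_le: "smor m n f \<Longrightarrow> m \<le> n"
  by (induction rule: smor.induct) auto

lemma smor_rst: "smor m n f \<Longrightarrow> rst m f = f"
  by (induction rule: smor.induct) (simp_all add: rst_def fun_eq_iff)

lemma swp_face_factor:
  assumes "1 \<le> i" "i < n" "1 \<le> j" "j \<le> n"
  shows "\<exists>j' g. 1 \<le> j' \<and> j' \<le> n \<and> smor (n - 1) (n - 1) g \<and>
           (\<forall>x. length x = n - 1 \<longrightarrow> swp i (face j a x) = face j' a (g x))"
proof -
  obtain i0 j0 k where ijk: "i = Suc i0" "j = Suc j0" "n = Suc k"
    using assms by (cases i; cases j; cases n) auto
  consider "j0 < i0" | "j0 = i0" | "j0 = Suc i0" | "Suc i0 < j0" by linarith
  then show ?thesis
  proof cases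
    case 1
    then obtain i1 where i1: "i0 = Suc i1" by (cases i0) auto
    have "smor k k (rst k (swp i0))" using assms ijk i1 by (intro smor.ssym) auto
    moreover have "\<forall>x. length x = k \<longrightarrow> swp i (face j a x) = face j a (rst k (swp i0) x)"
      using 1 assms ijk i1 swp_face_before[of j0 i1 _ a] by (simp add: rst_def)
    ultimately show ?thesis using assms ijk by auto
  next
    case 2
    then have "\<forall>x. length x = k \<longrightarrow> swp i (face j a x) = face (Suc j) a (rst k id x)"
      using ijk swp_face_at[of i0 _ a] assms by (simp add: rst_def)
    then show ?thesis using smor.sid[of k] assms ijk 2
      by (intro exI[of _ "Suc j"] exI[of _ "rst k id"]) auto
  next
    case 3
    then have "\<forall>x. length x = k \<longrightarrow> swp i (face j a x) = face i a (rst k id x)"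
      using ijk swp_face_at_Suc[of i0 _ a] assms by (simp add: rst_def)
    then show ?thesis using smor.sid[of k] assms ijk
      by (intro exI[of _ i] exI[of _ "rst k id"]) auto
  next
    case 4
    have "smor k k (rst k (swp i))" using assms ijk 4 by (intro smor.ssym) auto
    moreover have "\<forall>x. length x = k \<longrightarrow> swp i (face j a x) = face j a (rst k (swp i) x)"
      using 4 assms ijk swp_face_after[of i0 j0 _ a] by (simp add: rst_def)
    ultimately show ?thesis using assms ijk by auto
  qed
qed

lemma smor_comp_face:
  "smor k n g \<Longrightarrow> 1 \<le> j \<Longrightarrow> j \<le> k \<Longrightarrow>
   \<exists>j' a' g'. 1 \<le> j' \<and> j' \<le> n \<and> smor (k - 1) (n - 1) g' \<and>
     (\<forall>x. length x = k - 1 \<longrightarrow> g (face j a x) = face j' a' (g' x))"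
proof (induction arbitrary: j a rule: smor.induct)
  case (sid n)
  then show ?case using smor.sid[of "n - 1"]
    by (intro exI[of _ j] exI[of _ a] exI[of _ "rst (n - 1) id"]) (auto simp: rst_def)
next
  case (sface i n b)
  then have "smor (n - 1) n (rst (n - 1) (face j a))"
    using smor.sface[of j "n - 1" a] by simp
  moreover have "\<forall>x. length x = n - 1 \<longrightarrow> rst n (face i b) (face j a x) = face i b (rst (n - 1) (face j a) x)"
    using sface by (auto simp: rst_def)
  ultimately show ?case using sface by auto
next
  case (ssym i n)
  then obtain j' g where "1 \<le> j'" "j' \<le> n" "smor (n - 1) (n - 1) g"
    "\<forall>x. length x = n - 1 \<longrightarrow> swp i (face j a x) = face j' a (g x)"
    using swp_face_factor[of i n j a] by blast
  then show ?case using ssym by (auto simp: rst_def)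
next
  case (scomp m n f k g)
  obtain j1 a1 f' where f': "1 \<le> j1" "j1 \<le> n" "smor (m - 1) (n - 1) f'"
    "\<forall>x. length x = m - 1 \<longrightarrow> f (face j a x) = face j1 a1 (f' x)"
    using scomp.IH(1)[OF scomp.prems] by blast
  obtain j2 a2 g' where g': "1 \<le> j2" "j2 \<le> k" "smor (n - 1) (k - 1) g'"
    "\<forall>y. length y = n - 1 \<longrightarrow> g (face j1 a1 y) = face j2 a2 (g' y)"
    using scomp.IH(2)[OF f'(1,2)] by blast
  have "smor (m - 1) (k - 1) (rst (m - 1) (g' \<circ> f'))" using f'(3) g'(3) by (rule smor.scomp)
  moreover have "\<forall>x. length x = m - 1 \<longrightarrow>
      rst m (g \<circ> f) (face j a x) = face j2 a2 (rst (m - 1) (g' \<circ> f') x)"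
    using scomp.prems f'(4) g'(4) smor_length[OF f'(3)] by (auto simp: rst_def)
  ultimately show ?case using g'(1,2) by blast
qed

lemma smor_factor_face_pointwise:
  "smor m n \<chi> \<Longrightarrow> m < n \<Longrightarrow>
   \<exists>j a \<chi>'. 1 \<le> j \<and> j \<le> n \<and> smor m (n - 1) \<chi>' \<and>
     (\<forall>x. length x = m \<longrightarrow> \<chi> x = face j a (\<chi>' x))"
proof (induction rule: smor.induct)
  case (sface i n a)
  then show ?case using smor.sid[of n]
    by (intro exI[of _ i] exI[of _ a] exI[of _ "rst n id"]) (auto simp: rst_def)
next
  case (scomp m n f k g)
  show ?case
  proof (cases "n < k")
    case True
    then obtain j a g' where g': "1 \<le> j" "j \<le> k" "smor n (k - 1) g'"
      "\<forall>y. length y = n \<longrightarrow> g y = face j a (g' y)" using scomp.IH(2) by blast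
    have "smor m (k - 1) (rst m (g' \<circ> f))" using scomp.hyps(1) g'(3) by (rule smor.scomp)
    moreover have "\<forall>x. length x = m \<longrightarrow> rst m (g \<circ> f) x = face j a (rst m (g' \<circ> f) x)"
      using g'(4) smor_length[OF scomp.hyps(1)] by (auto simp: rst_def)
    ultimately show ?thesis using g'(1,2) by blast
  next
    case False
    with smor_le[OF scomp.hyps(2)] scomp.prems have nk: "n = k" "m < n" by simp_all
    then obtain j a f' where f': "1 \<le> j" "j \<le> n" "smor m (n - 1) f'"
      "\<forall>x. length x = m \<longrightarrow> f x = face j a (f' x)" using scomp.IH(1) by blast
    obtain j2 a2 g' where g': "1 \<le> j2" "j2 \<le> k" "smor (n - 1) (k - 1) g'"
      "\<forall>y. length y = n - 1 \<longrightarrow> g (face j a y) = face j2 a2 (g' y)"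
      using smor_comp_face[OF scomp.hyps(2) f'(1,2)] by blast
    have "smor m (k - 1) (rst m (g' \<circ> f'))" using f'(3) g'(3) by (rule smor.scomp)
    moreover have "\<forall>x. length x = m \<longrightarrow> rst m (g \<circ> f) x = face j2 a2 (rst m (g' \<circ> f') x)"
      using f'(4) g'(4) smor_length[OF f'(3)] by (auto simp: rst_def)
    ultimately show ?thesis using g'(1,2) by blast
  qed
qed auto

lemma smor_factor_face:
  assumes "smor m n \<chi>" "m < n"
  obtains j a \<chi>' where "1 \<le> j" "j \<le> n" "smor m (n - 1) \<chi>'"
    and "\<chi> = rst m (rst (n - 1) (face j a) \<circ> \<chi>')"
proof -
  obtain j a \<chi>' where f: "1 \<le> j" "j \<le> n" "smor m (n - 1) \<chi>'"
     "\<forall>x. length x = m \<longrightarrow> \<chi> x = face j a (\<chi>' x)"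
    using smor_factor_face_pointwise[OF assms] by blast
  have "\<chi> = rst m \<chi>" using smor_rst[OF assms(1)] by simp
  also have "\<dots> = rst m (rst (n - 1) (face j a) \<circ> \<chi>')"
    using f(4) smor_length[OF f(3)] by (auto simp: rst_def fun_eq_iff)
  finally show ?thesis using f(1-3) that by blast
qed

section \<open>Orthogonality as separation by boundaries\<close>

lemma presheafD:
  assumes "presheaf M X act"
  shows presheaf_closed: "\<And>m n f x. M m n f \<Longrightarrow> x \<in> X n \<Longrightarrow> act m n f x \<in> X m"
    and presheaf_id: "\<And>n x. x \<in> X n \<Longrightarrow> act n n (rst n id) x = x"
    and presheaf_comp: "\<And>m n k f g x. M m n f \<Longrightarrow> M n k g \<Longrightarrow> x \<in> X k \<Longrightarrow>
        act m k (rst m (g \<circ> f)) x = act m n f (act n k g x)"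
  using assms unfolding presheaf_def by blast+

lemma nat_transD:
  assumes "nat_trans M X actX Y actY h"
  shows nat_trans_closed: "\<And>n x. x \<in> X n \<Longrightarrow> h n x \<in> Y n"
    and nat_trans_commute: "\<And>m n f x. M m n f \<Longrightarrow> x \<in> X n \<Longrightarrow> h m (actX m n f x) = actY m n f (h n x)"
  using assms unfolding nat_trans_def by blast+

definition boundary_separates :: "nat \<Rightarrow> (nat \<Rightarrow> 'b set) \<Rightarrow> (nat \<Rightarrow> nat \<Rightarrow> cmap \<Rightarrow> 'b \<Rightarrow> 'b) \<Rightarrow> bool" where
  "boundary_separates p Y actY \<longleftrightarrow> (\<forall>y1\<in>Y p. \<forall>y2\<in>Y p.
     (\<forall>m \<chi>. smor m p \<chi> \<and> m < p \<longrightarrow> actY m p \<chi> y1 = actY m p \<chi> y2) \<longrightarrow> y1 = y2)"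

lemma orthogonal_to_if_boundary_separates:
  assumes sep: "boundary_separates p Y actY"
  shows "orthogonal_to p Y actY"
  unfolding orthogonal_to_def
proof (intro allI impI)
  fix h assume h: "nat_trans smor (po p) (po_act p) Y actY h"
  note h_closed = nat_trans_closed[OF h] and h_commute = nat_trans_commute[OF h]
  define g where "g n \<phi> = h n (False, \<phi>)" for n \<phi>
  have copies: "h p (True, \<phi>) = h p (False, \<phi>)" if "smor p p \<phi>" for \<phi>
  proof -
    have in_po: "(True, \<phi>) \<in> po p p" "(False, \<phi>) \<in> po p p" using that by (simp_all add: po_def)
    have "actY m p \<chi> (h p (True, \<phi>)) = actY m p \<chi> (h p (False, \<phi>))" if "smor m p \<chi>" "m < p" for m \<chi>
      using h_commute[OF that(1) in_po(1)] h_commute[OF that(1) in_po(2)] that(2)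
      by (simp add: po_act_def)
    then show ?thesis
      using sep h_closed[OF in_po(1)] h_closed[OF in_po(2)]
      unfolding boundary_separates_def by blast
  qed
  have "nat_trans smor (rep p) rep_act Y actY g"
    unfolding nat_trans_def
  proof (intro conjI allI impI)
    fix n \<phi> assume "\<phi> \<in> rep p n"
    then show "g n \<phi> \<in> Y n" using h_closed by (simp add: g_def rep_def po_def)
  next
    fix m n f \<phi> assume "smor m n f \<and> \<phi> \<in> rep p n"
    then show "g m (rep_act m n f \<phi>) = actY m n f (g n \<phi>)"
      using h_commute[of m n f "(False, \<phi>)"]
      by (simp add: g_def rep_def po_def rep_act_def po_act_def)
  qed
  moreover have "eq_on (po p) (\<lambda>n x. g n (codiag n x)) h"
    unfolding eq_on_def
  proof (intro allI ballI)
    fix n x assume "x \<in> po p n"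
    then obtain b \<phi> where x: "x = (b, \<phi>)" "smor n p \<phi>" "n < p \<longrightarrow> \<not> b"
      by (cases x) (auto simp: po_def)
    then show "g n (codiag n x) = h n x"
      using copies smor_le[OF x(2)] by (cases b) (auto simp: g_def codiag_def)
  qed
  moreover have "eq_on (rep p) g g'" if "eq_on (po p) (\<lambda>n x. g' n (codiag n x)) h" for g'
    using that by (fastforce simp: eq_on_def rep_def po_def g_def codiag_def)
  ultimately show "\<exists>g. nat_trans smor (rep p) rep_act Y actY g \<and>
      eq_on (po p) (\<lambda>n x. g n (codiag n x)) h \<and>
      (\<forall>g'. nat_trans smor (rep p) rep_act Y actY g' \<and>
            eq_on (po p) (\<lambda>n x. g' n (codiag n x)) h \<longrightarrow> eq_on (rep p) g g')"
    by blast
qed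

text \<open>Two cubes with the same boundary give a map out of the pushout; its factorisation
  through the codiagonal forces them to coincide.\<close>
lemma boundary_separates_if_orthogonal_to:
  assumes Y: "presheaf smor Y actY" and orth: "orthogonal_to p Y actY"
  shows "boundary_separates p Y actY"
  unfolding boundary_separates_def
proof (intro ballI impI)
  fix y1 y2 assume y: "y1 \<in> Y p" "y2 \<in> Y p"
    and boundary: "\<forall>m \<chi>. smor m p \<chi> \<and> m < p \<longrightarrow> actY m p \<chi> y1 = actY m p \<chi> y2"
  define h where "h m b\<phi> = actY m p (snd b\<phi>) (if fst b\<phi> then y1 else y2)" for m b\<phi>
  have "nat_trans smor (po p) (po_act p) Y actY h"
    unfolding nat_trans_def
  proof (intro conjI allI impI)
    fix m x assume "x \<in> po p m"
    then show "h m x \<in> Y m" using presheaf_closed[OF Y, OF _ y(1)] presheaf_closed[OF Y, OF _ y(2)]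
      by (auto simp: h_def po_def)
  next
    fix m k \<psi> x assume "smor m k \<psi> \<and> x \<in> po p k"
    moreover obtain b \<phi> where x: "x = (b, \<phi>)" by (cases x)
    ultimately have \<psi>: "smor m k \<psi>" and \<phi>: "smor k p \<phi>" by (auto simp: po_def)
    have "actY m k \<psi> (h k x) = actY m p (rst m (\<phi> \<circ> \<psi>)) (if b then y1 else y2)"
      using presheaf_comp[OF Y, OF \<psi> \<phi>] y by (simp add: h_def x)
    then show "h m (po_act p m k \<psi> x) = actY m k \<psi> (h k x)"
      using boundary smor.scomp[OF \<psi> \<phi>] by (cases b) (auto simp: h_def x po_act_def)
  qed
  then obtain g where "eq_on (po p) (\<lambda>n x. g n (codiag n x)) h"
    using orth unfolding orthogonal_to_def by blast
  then have "g p (snd x) = h p x" if "x \<in> po p p" for x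
    using that unfolding eq_on_def codiag_def by blast
  moreover have "(True, rst p id) \<in> po p p" "(False, rst p id) \<in> po p p"
    by (simp_all add: po_def smor.sid)
  ultimately have "h p (True, rst p id) = h p (False, rst p id)" by (metis snd_conv)
  then show "y1 = y2" using presheaf_id[OF Y] y by (simp add: h_def)
qed

lemma boundary_separates_words:
  assumes "2 \<le> p"
  shows "boundary_separates p (words S) word_act"
  unfolding boundary_separates_def
proof (intro ballI impI)
  fix u v assume uv: "u \<in> words S p" "v \<in> words S p"
    and boundary: "\<forall>m \<chi>. smor m p \<chi> \<and> m < p \<longrightarrow> word_act m p \<chi> u = word_act m p \<chi> v"
  have "del i u = del i v" if "i = 1 \<or> i = p" for i
  proof -
    have "smor (p - 1) p (rst (p - 1) (face i False))"
      using smor.sface[of i "p - 1" False] that assms by auto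
    then show ?thesis
      using boundary word_act_face[of i "p - 1" u False] word_act_face[of i "p - 1" v False]
        that assms uv by (auto simp: words_def)
  qed
  then show "u = v" using eq_if_del_first_last[of u p v] assms uv by (simp add: words_def)
qed

lemma sheaf_words: "sheaf (words S) word_act"
  by (simp add: sheaf_def presheaf_word_act orthogonal_to_if_boundary_separates
      boundary_separates_words)

section \<open>Morphisms into sheaves\<close>

lemma pmor_smor: "pmor m n f \<Longrightarrow> smor m n f"
  by (induction rule: pmor.induct) (auto intro: smor.intros)

lemma presheaf_pmor_if_presheaf_smor: "presheaf smor X act \<Longrightarrow> presheaf pmor X act"
  unfolding presheaf_def by (meson pmor_smor)

lemma pmor_act_eq_if_face_act_eq:
  assumes X1: "presheaf pmor X act1" and X2: "presheaf pmor X act2"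
    and face: "\<And>n i a x. 1 \<le> i \<Longrightarrow> i \<le> Suc n \<Longrightarrow> x \<in> X (Suc n) \<Longrightarrow>
      act1 n (Suc n) (rst n (face i a)) x = act2 n (Suc n) (rst n (face i a)) x"
  shows "pmor m n f \<Longrightarrow> x \<in> X n \<Longrightarrow> act1 m n f x = act2 m n f x"
proof (induction arbitrary: x rule: pmor.induct)
  case (pid n)
  then show ?case using presheaf_id[OF X1] presheaf_id[OF X2] by simp
next
  case (pface i n a)
  then show ?case by (rule face)
next
  case (pcomp m n f k g)
  have "act1 m k (rst m (g \<circ> f)) x = act1 m n f (act1 n k g x)"
    using presheaf_comp[OF X1, OF pcomp.hyps pcomp.prems] .
  also have "\<dots> = act2 m n f (act2 n k g x)"
    using pcomp.IH(1)[OF presheaf_closed[OF X2, OF pcomp.hyps(2) pcomp.prems]] pcomp.IH(2)[OF pcomp.prems]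
    by simp
  also have "\<dots> = act2 m k (rst m (g \<circ> f)) x"
    using presheaf_comp[OF X2, OF pcomp.hyps pcomp.prems] by simp
  finally show ?case .
qed

locale face_natural_map =
  fixes X :: "nat \<Rightarrow> 'a set" and actX :: "nat \<Rightarrow> nat \<Rightarrow> cmap \<Rightarrow> 'a \<Rightarrow> 'a"
    and Y :: "nat \<Rightarrow> 'b set" and actY :: "nat \<Rightarrow> nat \<Rightarrow> cmap \<Rightarrow> 'b \<Rightarrow> 'b"
    and F :: "nat \<Rightarrow> 'a \<Rightarrow> 'b"
  assumes X: "presheaf smor X actX" and Y: "sheaf Y actY"
    and F_closed: "\<And>n x. x \<in> X n \<Longrightarrow> F n x \<in> Y n"
    and F_face: "\<And>n i a x. 1 \<le> i \<Longrightarrow> i \<le> Suc n \<Longrightarrow> x \<in> X (Suc n) \<Longrightarrow>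
      F n (actX n (Suc n) (rst n (face i a)) x) = actY n (Suc n) (rst n (face i a)) (F (Suc n) x)"
begin

lemma presheaf_Y: "presheaf smor Y actY"
  using Y by (simp add: sheaf_def)

lemmas X_closed = presheaf_closed[OF X] and X_comp = presheaf_comp[OF X]
  and Y_closed = presheaf_closed[OF presheaf_Y] and Y_comp = presheaf_comp[OF presheaf_Y]

definition swaps_natural :: "nat \<Rightarrow> bool" where
  "swaps_natural n \<longleftrightarrow> (\<forall>i x. 1 \<le> i \<and> i < n \<and> x \<in> X n \<longrightarrow>
     F n (actX n n (rst n (swp i)) x) = actY n n (rst n (swp i)) (F n x))"

lemma natural_if_swaps_natural:
  "smor m n \<chi> \<Longrightarrow> \<forall>k\<le>n. swaps_natural k \<Longrightarrow> x \<in> X n \<Longrightarrow>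
   F m (actX m n \<chi> x) = actY m n \<chi> (F n x)"
proof (induction arbitrary: x rule: smor.induct)
  case (sid n)
  then show ?case using presheaf_id[OF X] presheaf_id[OF presheaf_Y] F_closed by simp
next
  case (sface i n a)
  then show ?case using F_face by blast
next
  case (ssym i n)
  then show ?case unfolding swaps_natural_def by blast
next
  case (scomp m n f k g)
  have x': "actX n k g x \<in> X n" using X_closed[OF scomp.hyps(2) scomp.prems(2)] .
  have "F m (actX m k (rst m (g \<circ> f)) x) = F m (actX m n f (actX n k g x))"
    using X_comp[OF scomp.hyps scomp.prems(2)] by simp
  also have "\<dots> = actY m n f (actY n k g (F k x))"
    using scomp.IH x' scomp.prems smor_le[OF scomp.hyps(2)] by simp
  also have "\<dots> = actY m k (rst m (g \<circ> f)) (F k x)"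
    using Y_comp[OF scomp.hyps F_closed[OF scomp.prems(2)]] by simp
  finally show ?case .
qed

text \<open>A map into a lower dimension factors through a face, so it only involves
  swaps of dimension below \<open>n\<close>.\<close>
lemma natural_below:
  assumes swaps: "\<forall>k<n. swaps_natural k" and \<chi>: "smor m n \<chi>" "m < n" and x: "x \<in> X n"
  shows "F m (actX m n \<chi> x) = actY m n \<chi> (F n x)"
proof -
  obtain j a \<chi>' where j: "1 \<le> j" "j \<le> n" and \<chi>': "smor m (n - 1) \<chi>'"
    and \<chi>_eq: "\<chi> = rst m (rst (n - 1) (face j a) \<circ> \<chi>')"
    using smor_factor_face[OF \<chi>] .
  define \<delta> where "\<delta> = rst (n - 1) (face j a)"
  have \<delta>: "smor (n - 1) n \<delta>" using smor.sface[of j "n - 1" a] j \<chi>(2) by (simp add: \<delta>_def)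
  have x': "actX (n - 1) n \<delta> x \<in> X (n - 1)" using X_closed[OF \<delta> x] .
  have "F m (actX m n \<chi> x) = F m (actX m (n - 1) \<chi>' (actX (n - 1) n \<delta> x))"
    using X_comp[OF \<chi>' \<delta> x] \<chi>_eq by (simp add: \<delta>_def)
  also have "\<dots> = actY m (n - 1) \<chi>' (F (n - 1) (actX (n - 1) n \<delta> x))"
    using natural_if_swaps_natural[OF \<chi>' _ x'] swaps \<chi>(2) by simp
  also have "F (n - 1) (actX (n - 1) n \<delta> x) = actY (n - 1) n \<delta> (F n x)"
    using F_face[of j "n - 1" x a] j x \<chi>(2) by (simp add: \<delta>_def)
  also have "actY m (n - 1) \<chi>' (actY (n - 1) n \<delta> (F n x)) = actY m n \<chi> (F n x)"
    using Y_comp[OF \<chi>' \<delta> F_closed[OF x]] \<chi>_eq by (simp add: \<delta>_def)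
  finally show ?thesis .
qed

lemma swaps_natural: "swaps_natural n"
proof (induction n rule: less_induct)
  case (less n)
  show ?case unfolding swaps_natural_def
  proof (intro allI impI)
    fix i x assume "1 \<le> i \<and> i < n \<and> x \<in> X n"
    then have i: "1 \<le> i" "i < n" and x: "x \<in> X n" by auto
    define s where "s = rst n (swp i)"
    have s: "smor n n s" using i by (simp add: s_def smor.ssym)
    have "actY m n \<chi> (F n (actX n n s x)) = actY m n \<chi> (actY n n s (F n x))"
      if \<chi>: "smor m n \<chi>" "m < n" for m \<chi>
    proof -
      have s\<chi>: "smor m n (rst m (s \<circ> \<chi>))" using \<chi>(1) s by (rule smor.scomp)
      have "actY m n \<chi> (F n (actX n n s x)) = F m (actX m n \<chi> (actX n n s x))"
        using natural_below[OF _ \<chi> X_closed[OF s x]] less.IH by simp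
      also have "\<dots> = F m (actX m n (rst m (s \<circ> \<chi>)) x)"
        using X_comp[OF \<chi>(1) s x] by simp
      also have "\<dots> = actY m n (rst m (s \<circ> \<chi>)) (F n x)"
        using natural_below[OF _ s\<chi> \<chi>(2) x] less.IH by simp
      also have "\<dots> = actY m n \<chi> (actY n n s (F n x))"
        using Y_comp[OF \<chi>(1) s F_closed[OF x]] .
      finally show ?thesis .
    qed
    moreover have "boundary_separates n Y actY"
      using Y i boundary_separates_if_orthogonal_to[OF presheaf_Y] by (simp add: sheaf_def)
    ultimately show "F n (actX n n (rst n (swp i)) x) = actY n n (rst n (swp i)) (F n x)"
      using F_closed X_closed[OF s x] Y_closed[OF s F_closed[OF x]]
      unfolding boundary_separates_def s_def by blast
  qed
qed

lemma nat_trans_smor: "nat_trans smor X actX Y actY F"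
  using F_closed natural_if_swaps_natural swaps_natural by (simp add: nat_trans_def)

end

theorem proposition11p3:
  fixes S :: "'a set"
    and actK :: "nat \<Rightarrow> nat \<Rightarrow> cmap \<Rightarrow> 'a list \<Rightarrow> 'a list"
  assumes "S \<noteq> {}"
    and "presheaf pmor (words S) actK"
    and "\<forall>n i a w. 1 \<le> i \<and> i \<le> Suc n \<and> w \<in> words S (Suc n) \<longrightarrow>
           actK n (Suc n) (rst n (face i a)) w = del i w"
  shows "\<exists>actZ.
    presheaf smor (words S) actZ \<and>
    (\<forall>n i a w. 1 \<le> i \<and> i \<le> Suc n \<and> w \<in> words S (Suc n) \<longrightarrow>
       actZ n (Suc n) (rst n (face i a)) w = del i w) \<and>
    (\<forall>n i w. 1 \<le> i \<and> i < n \<and> w \<in> words S n \<longrightarrow>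
       actZ n n (rst n (swp i)) w = swp i w) \<and>
    sheaf (words S) actZ \<and>
    nat_trans pmor (words S) actK (words S) actZ (\<lambda>n w. w) \<and>
    (\<forall>(Y :: nat \<Rightarrow> 'b set) actY f.
       sheaf Y actY \<and> nat_trans pmor (words S) actK Y actY f \<longrightarrow>
       (\<exists>g. nat_trans smor (words S) actZ Y actY g \<and> eq_on (words S) g f \<and>
            (\<forall>g'. nat_trans smor (words S) actZ Y actY g' \<and> eq_on (words S) g' f \<longrightarrow>
                  eq_on (words S) g g')))"
proof (intro exI[of _ word_act] conjI allI impI; (elim conjE)?)
  have face: "actK n (Suc n) (rst n (face i a)) w = word_act n (Suc n) (rst n (face i a)) w"
    if "1 \<le> i" "i \<le> Suc n" "w \<in> words S (Suc n)" for n i a w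
    using assms(3) word_act_face[of i n w a] that by (simp add: words_def)
  show "nat_trans pmor (words S) actK (words S) word_act (\<lambda>n w. w)"
    using pmor_act_eq_if_face_act_eq[OF assms(2) presheaf_pmor_if_presheaf_smor[OF presheaf_word_act]]
      face by (simp add: nat_trans_def)
  fix Y :: "nat \<Rightarrow> 'b set" and actY f
  assume Y: "sheaf Y actY" and f: "nat_trans pmor (words S) actK Y actY f"
  have "face_natural_map (words S) word_act Y actY f"
  proof (unfold_locales)
    fix n i a w assume i: "1 \<le> i" "i \<le> Suc n" and w: "w \<in> words S (Suc n)"
    show "f n (word_act n (Suc n) (rst n (face i a)) w) = actY n (Suc n) (rst n (face i a)) (f (Suc n) w)"
      using face[OF i w] nat_trans_commute[OF f, OF pmor.pface[OF i] w] by simp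
  qed (use presheaf_word_act Y nat_trans_closed[OF f] in auto)
  then show "\<exists>g. nat_trans smor (words S) word_act Y actY g \<and> eq_on (words S) g f \<and>
      (\<forall>g'. nat_trans smor (words S) word_act Y actY g' \<and> eq_on (words S) g' f \<longrightarrow>
            eq_on (words S) g g')"
    using face_natural_map.nat_trans_smor by (fastforce simp: eq_on_def)
qed (auto simp: presheaf_word_act sheaf_words word_act_face word_act_swp words_def)

end
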